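(* Let $X\subseteq\mathbb{C}^n$ be a complex analytic set and $\mathcal M\subseteq\mathcal O_X^p$ an $\mathcal O_X$-submodule. Then $\mathcal M\subseteq\mathcal M_{\mathcal L}\subseteq\overline{\mathcal M}$ at every point of $X$.
   Context: $\mathcal L_X$ is the sheaf of locally Lipschitz functions on $X$, and $\mathcal M_{\mathcal L}:=\mathcal L_X\mathcal M\cap\mathcal O_X^p$ is the strong Lipschitz saturation of $\mathcal M$. $\overline{\mathcal M}$ denotes the integral closure of $\mathcal M$. *)

theory Defs
  imports "HOL-Analysis.Analysis"
begin

definition cscale :: "complex \<Rightarrow> complex^'p \<Rightarrow> complex^'p" where
  "cscale c v = (\<chi> i. c * v$i)"

definition holo_on :: "(complex^'n) set \<Rightarrow> (complex^'n \<Rightarrow> complex) \<Rightarrow> bool" where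
  "holo_on U g \<longleftrightarrow> (\<forall>z\<in>U. \<exists>L. (g has_derivative L) (at z) \<and> (\<forall>c v. L (cscale c v) = c * L v))"

definition analytic_set :: "(complex^'n) set \<Rightarrow> bool" where
  "analytic_set X \<longleftrightarrow> (\<forall>z\<in>X. \<exists>U k (f :: nat \<Rightarrow> complex^'n \<Rightarrow> complex).
      open U \<and> z \<in> U \<and> (\<forall>i<k. holo_on U (f i)) \<and> X \<inter> U = {y\<in>U. \<forall>i<k. f i y = 0})"

definition germ_eq :: "(complex^'n) set \<Rightarrow> complex^'n \<Rightarrow> (complex^'n \<Rightarrow> 'b) \<Rightarrow> (complex^'n \<Rightarrow> 'b) \<Rightarrow> bool" where
  "germ_eq X x0 f g \<longleftrightarrow> (\<exists>U. open U \<and> x0 \<in> U \<and> (\<forall>y\<in>X \<inter> U. f y = g y))"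

text \<open>Representatives of germs in the stalk O_{X,x0}.\<close>
definition OX :: "(complex^'n) set \<Rightarrow> complex^'n \<Rightarrow> (complex^'n \<Rightarrow> complex) set" where
  "OX X x0 = {f. \<exists>U g. open U \<and> x0 \<in> U \<and> holo_on U g \<and> (\<forall>y\<in>X \<inter> U. f y = g y)}"

definition OXp :: "(complex^'n) set \<Rightarrow> complex^'n \<Rightarrow> (complex^'n \<Rightarrow> complex^'p) set" where
  "OXp X x0 = {h. \<forall>j. (\<lambda>y. h y $ j) \<in> OX X x0}"

text \<open>Representatives of germs in the stalk L_{X,x0} of locally Lipschitz functions on X.\<close>
definition LX :: "(complex^'n) set \<Rightarrow> complex^'n \<Rightarrow> (complex^'n \<Rightarrow> complex) set" where
  "LX X x0 = {f. \<exists>U C. open U \<and> x0 \<in> U \<and> C-lipschitz_on (X \<inter> U) f}"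

definition is_submodule_germ :: "(complex^'n) set \<Rightarrow> complex^'n \<Rightarrow> (complex^'n \<Rightarrow> complex^'p) set \<Rightarrow> bool" where
  "is_submodule_germ X x0 M \<longleftrightarrow>
     M \<subseteq> OXp X x0 \<and> (\<lambda>_. 0) \<in> M \<and>
     (\<forall>a\<in>M. \<forall>b\<in>M. (\<lambda>y. a y + b y) \<in> M) \<and>
     (\<forall>c\<in>OX X x0. \<forall>a\<in>M. (\<lambda>y. cscale (c y) (a y)) \<in> M) \<and>
     (\<forall>a\<in>M. \<forall>b. germ_eq X x0 a b \<longrightarrow> b \<in> M)"

text \<open>Stalk at x0 of the strong Lipschitz saturation M_L = L_X M \<inter> O_X^p.\<close>
definition lip_saturation :: "(complex^'n) set \<Rightarrow> complex^'n \<Rightarrow> (complex^'n \<Rightarrow> complex^'p) set \<Rightarrow> (complex^'n \<Rightarrow> complex^'p) set" where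
  "lip_saturation X x0 M = {h \<in> OXp X x0. \<exists>k (f :: nat \<Rightarrow> complex^'n \<Rightarrow> complex) m.
      (\<forall>i<k. f i \<in> LX X x0 \<and> m i \<in> M) \<and>
      germ_eq X x0 h (\<lambda>y. \<Sum>i<k. cscale (f i y) (m i y))}"

text \<open>Stalk at x0 of the integral closure of M (Gaffney's curve criterion):
  h is integral over M iff for every analytic curve phi : (C,0) \<rightarrow> (X,x0),
  h \<circ> phi lies in the O_1-module generated by phi^* M.\<close>
definition integral_closure :: "(complex^'n) set \<Rightarrow> complex^'n \<Rightarrow> (complex^'n \<Rightarrow> complex^'p) set \<Rightarrow> (complex^'n \<Rightarrow> complex^'p) set" where
  "integral_closure X x0 M = {h \<in> OXp X x0. \<forall>(\<phi> :: complex \<Rightarrow> complex^'n) r.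
      (0 < r \<and> (\<forall>j. (\<lambda>t. \<phi> t $ j) holomorphic_on ball 0 r) \<and> \<phi> 0 = x0 \<and> \<phi> ` ball 0 r \<subseteq> X) \<longrightarrow>
      (\<exists>s k (a :: nat \<Rightarrow> complex \<Rightarrow> complex) m. 0 < s \<and>
         (\<forall>i<k. a i holomorphic_on ball 0 s \<and> m i \<in> M) \<and>
         (\<forall>t\<in>ball 0 s. h (\<phi> t) = (\<Sum>i<k. cscale (a i t) (m i (\<phi> t)))))}"

end

(* Along a holomorphic curve phi through x0, an element h = sum f_i m_i of M_L pulls back to a
   combination of the holomorphic vectors m_i o phi whose coefficients f_i o phi are merely
   continuous, Lipschitz functions being continuous. In one variable such a combination can be
   made holomorphic: in a row j0 where some generator does not vanish identically, pick the entry
   v_i of least vanishing order at 0. Every entry of that row is a holomorphic multiple q_l v_i,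
   so the coefficient e = c_i + sum c_l q_l equals g_j0 / v_i away from 0; being continuous, it is
   holomorphic by Riemann's removable singularity theorem. Subtracting e v_i eliminates the
   generator v_i, and induction on the number of generators finishes the argument. By the curve
   criterion h is then integral over M, while M is contained in M_L via the constant Lipschitz
   function 1. Neither inclusion uses that X is analytic. *)

theory Submission
  imports Defs "HOL-Complex_Analysis.Complex_Analysis"
begin

lemma holomorphic_on_ball_vanishes_or_factors:
  fixes f :: "complex \<Rightarrow> complex"
  assumes hol: "f holomorphic_on ball 0 s" and s: "0 < s"
  shows "(\<forall>t\<in>ball 0 s. f t = 0) \<or>
    (\<exists>n u r. 0 < r \<and> u holomorphic_on ball 0 r \<and> (\<forall>t\<in>ball 0 r. f t = t ^ n * u t \<and> u t \<noteq> 0))"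
proof (cases "f 0 = 0")
  case True
  show ?thesis
  proof (cases "f constant_on ball 0 s")
    case True
    then show ?thesis
      using \<open>f 0 = 0\<close> s unfolding constant_on_def by force
  next
    case False
    have centre: "0 \<in> ball (0::complex) s" using s by simp
    show ?thesis
    proof (rule holomorphic_factor_zero_nonconstant[OF hol open_ball connected_ball centre \<open>f 0 = 0\<close> False])
      fix u r n
      assume "0 < r" "u holomorphic_on ball 0 r"
        "\<And>t. t \<in> ball 0 r \<Longrightarrow> f t = (t - 0) ^ n * u t" "\<And>t. t \<in> ball 0 r \<Longrightarrow> u t \<noteq> 0"
      then show ?thesis by (intro disjI2 exI[of _ n] exI[of _ u] exI[of _ r]) auto
    qed
  qed
next
  case False
  have "isCont f 0"
    using hol s
    by (meson centre_in_ball holomorphic_on_imp_continuous_on open_ball continuous_on_eq_continuous_at)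
  then obtain e where e: "0 < e" "\<And>t. dist 0 t < e \<Longrightarrow> f t \<noteq> 0"
    using continuous_at_avoid[of 0 f 0] False by blast
  have "f holomorphic_on ball 0 (min e s)"
    using hol by (rule holomorphic_on_subset) auto
  then show ?thesis
    using e s by (intro disjI2 exI[of _ 0] exI[of _ f] exI[of _ "min e s"]) auto
qed

text \<open>The pivot \<open>i\<close> is a member of least vanishing order at \<open>0\<close>.\<close>

lemma holomorphic_family_pivot:
  fixes w :: "'i \<Rightarrow> complex \<Rightarrow> complex"
  assumes A: "finite A" and s: "0 < s" and hol: "\<And>l. l \<in> A \<Longrightarrow> w l holomorphic_on ball 0 s"
    and nonzero: "l0 \<in> A" "t0 \<in> ball 0 s" "w l0 t0 \<noteq> 0"
  obtains i \<rho> q where "i \<in> A" "0 < \<rho>" "\<rho> \<le> s" "\<And>l. q l holomorphic_on ball 0 \<rho>"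
    "\<And>l t. l \<in> A \<Longrightarrow> t \<in> ball 0 \<rho> \<Longrightarrow> w l t = q l t * w i t"
    "\<And>t. t \<in> ball 0 \<rho> - {0} \<Longrightarrow> w i t \<noteq> 0"
proof -
  define S where "S = {l \<in> A. \<exists>t\<in>ball 0 s. w l t \<noteq> 0}"
  have S: "finite S" "S \<subseteq> A"
    using A unfolding S_def by (auto intro: finite_subset)
  have "l0 \<in> S"
    using nonzero unfolding S_def by blast
  have "\<forall>l\<in>S. \<exists>n u r. 0 < r \<and> u holomorphic_on ball 0 r \<and>
      (\<forall>t\<in>ball 0 r. w l t = t ^ n * u t \<and> u t \<noteq> 0)"
    using holomorphic_on_ball_vanishes_or_factors[OF hol s] unfolding S_def by blast
  then obtain N U R where NUR: "\<And>l. l \<in> S \<Longrightarrow> 0 < R l \<and> U l holomorphic_on ball 0 (R l) \<and>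
      (\<forall>t\<in>ball 0 (R l). w l t = t ^ N l * U l t \<and> U l t \<noteq> 0)"
    by metis
  obtain i where i: "i \<in> S" "N i = Min (N ` S)"
    using Min_in[of "N ` S"] S \<open>l0 \<in> S\<close> by (metis empty_iff finite_imageI image_iff image_is_empty)
  have i_least: "N i \<le> N l" if "l \<in> S" for l
    using i(2) S(1) that by simp
  define \<rho> where "\<rho> = Min (insert s (R ` S))"
  have \<rho>: "0 < \<rho>" "\<rho> \<le> s" "\<And>l. l \<in> S \<Longrightarrow> ball 0 \<rho> \<subseteq> ball 0 (R l)"
    using S(1) NUR s unfolding \<rho>_def by (auto intro!: subset_ball)
  define q where "q l t = (if l \<in> S then t ^ (N l - N i) * U l t / U i t else 0)" for l t
  show ?thesis
  proof (rule that)
    show "i \<in> A" using i(1) S(2) by blast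
    show "0 < \<rho>" "\<rho> \<le> s" using \<rho> by auto
    show "q l holomorphic_on ball 0 \<rho>" for l
    proof (cases "l \<in> S")
      case True
      then show ?thesis
        unfolding q_def using NUR[OF True] NUR[OF i(1)] \<rho>(3)[OF True] \<rho>(3)[OF i(1)]
        by (auto intro!: holomorphic_intros elim: holomorphic_on_subset)
    next
      case False
      then have "q l = (\<lambda>_. 0)" by (simp add: q_def fun_eq_iff)
      then show ?thesis by simp
    qed
    show "w l t = q l t * w i t" if "l \<in> A" "t \<in> ball 0 \<rho>" for l t
    proof (cases "l \<in> S")
      case True
      have "t ^ (N l - N i) * t ^ N i = t ^ N l"
        using i_least[OF True] by (simp flip: power_add)
      moreover have "w l t = t ^ N l * U l t" "w i t = t ^ N i * U i t" "U i t \<noteq> 0"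
        using NUR True i(1) \<rho>(3) that(2) by blast+
      ultimately show ?thesis
        unfolding q_def using True by (simp add: field_simps)
    next
      case False
      then show ?thesis
        using that \<rho>(2) unfolding S_def q_def by auto
    qed
    show "w i t \<noteq> 0" if "t \<in> ball 0 \<rho> - {0}" for t
      using NUR[OF i(1)] \<rho>(3)[OF i(1)] that by (fastforce simp: subset_iff)
  qed
qed

lemma holomorphic_on_continuous_quotient:
  assumes S: "open S" and K: "finite K" and e: "continuous_on S e"
    and g: "g holomorphic_on S" and w: "w holomorphic_on S"
    and quotient: "\<And>t. t \<in> S - K \<Longrightarrow> g t = e t * w t" and nonzero: "\<And>t. t \<in> S - K \<Longrightarrow> w t \<noteq> 0"
  shows "e holomorphic_on S"
proof (rule no_isolated_singularity'[OF _ _ S finite_Int[OF disjI1, OF K]])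
  show "(e \<longlongrightarrow> e z) (at z within S)" if "z \<in> K \<inter> S" for z
    using e that unfolding continuous_on_def by blast
  have "(\<lambda>t. g t / w t) holomorphic_on S - K"
    using g w nonzero by (intro holomorphic_on_divide) (auto elim: holomorphic_on_subset)
  then have "e holomorphic_on S - K"
    by (rule holomorphic_transform) (use quotient nonzero in auto)
  moreover have "S - K \<inter> S = S - K" by blast
  ultimately show "e holomorphic_on S - K \<inter> S" by simp
qed

lemma sum_pivot_decomposition:
  fixes c v q :: "'i \<Rightarrow> 'a::comm_ring"
  assumes "finite A" "i \<in> A"
  shows "(\<Sum>l\<in>A. c l * v l) =
    (c i + (\<Sum>l\<in>A - {i}. c l * q l)) * v i + (\<Sum>l\<in>A - {i}. c l * (v l - q l * v i))"
  using assms
  by (simp add: sum.remove algebra_simps sum_subtractf sum_distrib_left sum_distrib_right)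

lemma continuous_combination_imp_holomorphic_combination:
  fixes g :: "'j::finite \<Rightarrow> complex \<Rightarrow> complex" and v :: "'i \<Rightarrow> 'j \<Rightarrow> complex \<Rightarrow> complex"
    and c :: "'i \<Rightarrow> complex \<Rightarrow> complex"
  assumes "finite A" "0 < s" "\<forall>l\<in>A. continuous_on (ball 0 s) (c l)"
    "\<forall>l\<in>A. \<forall>j. v l j holomorphic_on ball 0 s" "\<forall>j. g j holomorphic_on ball 0 s"
    "\<forall>t\<in>ball 0 s. \<forall>j. g j t = (\<Sum>l\<in>A. c l t * v l j t)"
  shows "\<exists>r a. 0 < r \<and> (\<forall>l\<in>A. a l holomorphic_on ball 0 r) \<and>
    (\<forall>t\<in>ball 0 r. \<forall>j. g j t = (\<Sum>l\<in>A. a l t * v l j t))"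
  using assms
proof (induction A arbitrary: s g v c rule: finite_remove_induct)
  case empty
  then show ?case by (intro exI[of _ s]) auto
next
  case (remove A)
  note s = remove.prems(1) and c = remove.prems(2) and v = remove.prems(3)
    and g = remove.prems(4) and combination = remove.prems(5)
  show ?case
  proof (cases "\<forall>l\<in>A. \<forall>j. \<forall>t\<in>ball 0 s. v l j t = 0")
    case True
    then show ?thesis
      using s combination by (intro exI[of _ s] exI[of _ "\<lambda>_ _. 0"]) auto
  next
    case False
    then obtain l0 j0 t0 where "l0 \<in> A" "t0 \<in> ball 0 s" "v l0 j0 t0 \<noteq> 0"
      by blast
    with holomorphic_family_pivot[of A s "\<lambda>l. v l j0"] remove.hyps(1) s v
    obtain i \<rho> q where i: "i \<in> A" and \<rho>: "0 < \<rho>" "\<rho> \<le> s"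
      and q: "\<And>l. q l holomorphic_on ball 0 \<rho>"
      and divides: "\<And>l t. l \<in> A \<Longrightarrow> t \<in> ball 0 \<rho> \<Longrightarrow> v l j0 t = q l t * v i j0 t"
      and pivot_nonzero: "\<And>t. t \<in> ball 0 \<rho> - {0} \<Longrightarrow> v i j0 t \<noteq> 0"
      by metis
    have small: "ball 0 \<rho> \<subseteq> ball 0 s"
      using \<rho>(2) by (rule subset_ball)
    have g_small: "\<And>j. g j holomorphic_on ball 0 \<rho>"
      and v_small: "\<And>l j. l \<in> A \<Longrightarrow> v l j holomorphic_on ball 0 \<rho>"
      using g v small by (meson holomorphic_on_subset)+
    define e where "e t = c i t + (\<Sum>l\<in>A - {i}. c l t * q l t)" for t
    define g' where "g' j t = g j t - e t * v i j t" for j t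
    define v' where "v' l j t = v l j t - q l t * v i j t" for l j t
    have g'_combination: "g' j t = (\<Sum>l\<in>A - {i}. c l t * v' l j t)" if "t \<in> ball 0 \<rho>" for j t
    proof -
      have "g j t = (\<Sum>l\<in>A. c l t * v l j t)"
        using combination small that by blast
      then show ?thesis
        using sum_pivot_decomposition[OF remove.hyps(1) i, of "\<lambda>l. c l t" "\<lambda>l. v l j t" "\<lambda>l. q l t"]
        unfolding g'_def v'_def e_def by simp
    qed
    have "e holomorphic_on ball 0 \<rho>"
    proof (rule holomorphic_on_continuous_quotient[of _ "{0}" _ "g j0" "v i j0"])
      show "continuous_on (ball 0 \<rho>) e"
        unfolding e_def using c i small q
        by (intro continuous_on_add continuous_on_sum continuous_on_mult)
          (auto intro: continuous_on_subset holomorphic_on_imp_continuous_on)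
      show "g j0 holomorphic_on ball 0 \<rho>" "v i j0 holomorphic_on ball 0 \<rho>"
        using g_small v_small i by blast+
      show "g j0 t = e t * v i j0 t" if "t \<in> ball 0 \<rho> - {0}" for t
        using g'_combination[of t j0] divides that unfolding g'_def v'_def by simp
    qed (use pivot_nonzero in auto)
    then have "\<forall>j. g' j holomorphic_on ball 0 \<rho>" "\<forall>l\<in>A - {i}. \<forall>j. v' l j holomorphic_on ball 0 \<rho>"
      unfolding g'_def v'_def using g_small v_small q i
      by (auto intro!: holomorphic_intros)
    moreover have "\<forall>l\<in>A - {i}. continuous_on (ball 0 \<rho>) (c l)"
      using c small by (meson DiffD1 continuous_on_subset)
    ultimately obtain r a where r: "0 < r" and a: "\<forall>l\<in>A - {i}. a l holomorphic_on ball 0 r"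
      and a_combination: "\<forall>t\<in>ball 0 r. \<forall>j. g' j t = (\<Sum>l\<in>A - {i}. a l t * v' l j t)"
      using remove.IH[OF i \<rho>(1)] g'_combination by blast
    define a' where "a' = a(i := \<lambda>t. e t - (\<Sum>l\<in>A - {i}. a l t * q l t))"
    have a'_pivot: "a' i = (\<lambda>t. e t - (\<Sum>l\<in>A - {i}. a l t * q l t))"
      unfolding a'_def by simp
    have a'_other: "(\<Sum>l\<in>A - {i}. a' l t * f l) = (\<Sum>l\<in>A - {i}. a l t * f l)" for t f
      unfolding a'_def by (auto intro: sum.cong)
    show ?thesis
    proof (intro exI conjI)
      show "0 < min r \<rho>" using r \<rho> by simp
      have "ball 0 (min r \<rho>) \<subseteq> ball 0 r" "ball 0 (min r \<rho>) \<subseteq> ball 0 \<rho>"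
        by (simp_all add: subset_ball)
      then have "e holomorphic_on ball 0 (min r \<rho>)" "\<And>l. q l holomorphic_on ball 0 (min r \<rho>)"
        "\<And>l. l \<in> A - {i} \<Longrightarrow> a l holomorphic_on ball 0 (min r \<rho>)"
        using \<open>e holomorphic_on ball 0 \<rho>\<close> q a by (blast intro: holomorphic_on_subset)+
      then show "\<forall>l\<in>A. a' l holomorphic_on ball 0 (min r \<rho>)"
        unfolding a'_def by (auto intro!: holomorphic_intros)
      show "\<forall>t\<in>ball 0 (min r \<rho>). \<forall>j. g j t = (\<Sum>l\<in>A. a' l t * v l j t)"
      proof (intro ballI allI)
        fix t :: complex and j assume t: "t \<in> ball 0 (min r \<rho>)"
        have "(\<Sum>l\<in>A. a' l t * v l j t) =
            (a' i t + (\<Sum>l\<in>A - {i}. a l t * q l t)) * v i j t + (\<Sum>l\<in>A - {i}. a l t * v' l j t)"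
          using sum_pivot_decomposition[OF remove.hyps(1) i, of "\<lambda>l. a' l t" "\<lambda>l. v l j t" "\<lambda>l. q l t"]
          unfolding v'_def a'_other .
        also have "\<dots> = e t * v i j t + g' j t"
          using a_combination t unfolding a'_pivot by simp
        finally show "g j t = (\<Sum>l\<in>A. a' l t * v l j t)"
          unfolding g'_def by simp
      qed
    qed
  qed
qed

lemma has_derivative_vec_of_field_derivatives:
  fixes \<phi> :: "complex \<Rightarrow> complex^'n"
  assumes "\<And>j. ((\<lambda>t. \<phi> t $ j) has_field_derivative d j) (at t)"
  shows "(\<phi> has_derivative (\<lambda>z. \<chi> j. d j * z)) (at t)"
proof -
  have linear: "bounded_linear (\<lambda>z::complex. \<chi> j. d j * z)"
    by (rule bounded_linearI') (auto simp: vec_eq_iff algebra_simps)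
  have "((\<lambda>y. \<chi> j. ((\<phi> y $ j - \<phi> t $ j) - d j * (y - t)) /\<^sub>R norm (y - t)) \<longlongrightarrow> (\<chi> j. 0)) (at t)"
    using assms unfolding has_field_derivative_def has_derivative_at_within
    by (intro tendsto_vec_lambda) auto
  moreover have "(\<lambda>y. \<chi> j. ((\<phi> y $ j - \<phi> t $ j) - d j * (y - t)) /\<^sub>R norm (y - t))
      = (\<lambda>y. (\<phi> y - \<phi> t - (\<chi> j. d j * (y - t))) /\<^sub>R norm (y - t))"
    by (simp add: fun_eq_iff vec_eq_iff)
  ultimately show ?thesis
    using linear unfolding has_derivative_at_within by (simp add: zero_vec_def)
qed

lemma holo_on_compose_holomorphic:
  fixes G :: "complex^'n \<Rightarrow> complex" and \<phi> :: "complex \<Rightarrow> complex^'n"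
  assumes G: "holo_on U G" and B: "open B" and \<phi>: "\<And>j. (\<lambda>t. \<phi> t $ j) holomorphic_on B"
    and maps: "\<phi> ` B \<subseteq> U"
  shows "(\<lambda>t. G (\<phi> t)) holomorphic_on B"
  unfolding holomorphic_on_open[OF B]
proof
  fix t assume t: "t \<in> B"
  have "\<forall>j. \<exists>d. ((\<lambda>t. \<phi> t $ j) has_field_derivative d) (at t)"
    using \<phi> t B holomorphic_on_open by blast
  then obtain d where d: "\<And>j. ((\<lambda>t. \<phi> t $ j) has_field_derivative d j) (at t)"
    by metis
  obtain L where L: "(G has_derivative L) (at (\<phi> t))" and L_complex: "\<And>c v. L (cscale c v) = c * L v"
    using G t maps unfolding holo_on_def by blast
  have "((\<lambda>t. G (\<phi> t)) has_derivative (\<lambda>z. L (\<chi> j. d j * z))) (at t)"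
    using diff_chain_at[OF has_derivative_vec_of_field_derivatives[OF d] L] by (simp add: o_def)
  moreover have "(\<lambda>z. L (\<chi> j. d j * z)) = (*) (L (\<chi> j. d j))"
  proof
    fix z
    show "L (\<chi> j. d j * z) = L (\<chi> j. d j) * z"
      using L_complex[of z "\<chi> j. d j"] by (simp add: cscale_def mult.commute)
  qed
  ultimately show "\<exists>f'. ((\<lambda>t. G (\<phi> t)) has_field_derivative f') (at t)"
    unfolding has_field_derivative_def by auto
qed

lemma eventually_at_right_0_imp_ex_pos:
  assumes "\<forall>\<^sub>F e in at_right (0::real). P e"
  obtains e where "0 < e" "P e"
proof -
  obtain b :: real where "0 < b" "\<forall>e>0. e < b \<longrightarrow> P e"
    using assms unfolding eventually_at_right_field by blast
  then show thesis
    using that[of "b / 2"] by simp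
qed

lemma eventually_at_right_0I:
  assumes "0 < d" "\<And>e. 0 < e \<Longrightarrow> e \<le> d \<Longrightarrow> P e"
  shows "\<forall>\<^sub>F e in at_right (0::real). P e"
  unfolding eventually_at_right_field using assms by (intro exI[of _ d]) auto

locale holomorphic_curve =
  fixes X :: "(complex^'n) set" and x0 :: "complex^'n" and \<phi> :: "complex \<Rightarrow> complex^'n" and r :: real
  assumes radius: "0 < r" and holomorphic: "\<And>j. (\<lambda>t. \<phi> t $ j) holomorphic_on ball 0 r"
    and centre: "\<phi> 0 = x0" and maps_into: "\<phi> ` ball 0 r \<subseteq> X"
begin

lemma continuous_on_ball: "continuous_on (ball 0 r) \<phi>"
  using continuous_on_vec_lambda[of "ball 0 r" "\<lambda>j t. \<phi> t $ j"] holomorphic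
  by (simp add: holomorphic_on_imp_continuous_on)

lemma small_ball_maps_into:
  assumes "open W" "x0 \<in> W"
  obtains d where "0 < d" "d \<le> r" "\<phi> ` ball 0 d \<subseteq> W \<inter> X"
proof -
  obtain \<epsilon> where "0 < \<epsilon>" and \<epsilon>: "ball x0 \<epsilon> \<subseteq> W"
    using assms open_contains_ball by blast
  have "continuous (at 0) \<phi>"
    using continuous_on_ball radius by (simp add: continuous_on_eq_continuous_at)
  then obtain d where "0 < d" and d: "\<phi> ` ball 0 d \<subseteq> ball x0 \<epsilon>"
    using \<open>0 < \<epsilon>\<close> unfolding continuous_at_ball centre by blast
  have "\<phi> ` ball 0 (min d r) \<subseteq> \<phi> ` ball 0 d" "\<phi> ` ball 0 (min d r) \<subseteq> \<phi> ` ball 0 r"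
    by (simp_all add: image_mono subset_ball)
  then have "\<phi> ` ball 0 (min d r) \<subseteq> W \<inter> X"
    using d \<epsilon> maps_into by blast
  then show ?thesis
    using that[of "min d r"] \<open>0 < d\<close> radius by simp
qed

lemma eventually_holomorphic_pullback:
  assumes "f \<in> OX X x0"
  shows "\<forall>\<^sub>F e in at_right 0. (\<lambda>t. f (\<phi> t)) holomorphic_on ball 0 e"
proof -
  obtain U G where U: "open U" "x0 \<in> U" and G: "holo_on U G" and agree: "\<forall>y\<in>X \<inter> U. f y = G y"
    using assms unfolding OX_def by blast
  obtain d where d: "0 < d" "d \<le> r" "\<phi> ` ball 0 d \<subseteq> U \<inter> X"
    by (rule small_ball_maps_into[OF U])
  have "(\<lambda>t. G (\<phi> t)) holomorphic_on ball 0 d"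
    using holomorphic_on_subset[OF holomorphic subset_ball[OF d(2)]] d(3)
    by (intro holo_on_compose_holomorphic[OF G]) auto
  moreover have "G (\<phi> t) = f (\<phi> t)" if "t \<in> ball 0 d" for t
  proof -
    have "\<phi> t \<in> X \<inter> U"
      using d(3) that by blast
    then show ?thesis
      using agree by simp
  qed
  ultimately have "(\<lambda>t. f (\<phi> t)) holomorphic_on ball 0 d"
    by (rule holomorphic_transform)
  then show ?thesis
    using d(1) by (intro eventually_at_right_0I) (auto intro: holomorphic_on_subset[OF _ subset_ball])
qed

lemma eventually_continuous_pullback:
  assumes "f \<in> LX X x0"
  shows "\<forall>\<^sub>F e in at_right 0. continuous_on (ball 0 e) (\<lambda>t. f (\<phi> t))"
proof -
  obtain U C where U: "open U" "x0 \<in> U" and lipschitz: "C-lipschitz_on (X \<inter> U) f"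
    using assms unfolding LX_def by blast
  obtain d where d: "0 < d" "d \<le> r" "\<phi> ` ball 0 d \<subseteq> U \<inter> X"
    by (rule small_ball_maps_into[OF U])
  have "continuous_on (ball 0 d) (\<lambda>t. f (\<phi> t))"
    using continuous_on_subset[OF continuous_on_ball subset_ball[OF d(2)]]
      lipschitz_on_continuous_on[OF lipschitz] d(3)
    by (intro continuous_on_compose2[of "X \<inter> U" f "ball 0 d" \<phi>]) auto
  then show ?thesis
    using d(1) by (intro eventually_at_right_0I) (auto intro: continuous_on_subset[OF _ subset_ball])
qed

lemma eventually_germ_eq_pullback:
  assumes "germ_eq X x0 a b"
  shows "\<forall>\<^sub>F e in at_right 0. \<forall>t\<in>ball 0 e. a (\<phi> t) = b (\<phi> t)"
proof -
  obtain U where U: "open U" "x0 \<in> U" and agree: "\<forall>y\<in>X \<inter> U. a y = b y"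
    using assms unfolding germ_eq_def by blast
  obtain d where "0 < d" "d \<le> r" "\<phi> ` ball 0 d \<subseteq> U \<inter> X"
    by (rule small_ball_maps_into[OF U])
  then have "\<forall>t\<in>ball 0 d. a (\<phi> t) = b (\<phi> t)"
    using agree by blast
  then show ?thesis
    using \<open>0 < d\<close> by (intro eventually_at_right_0I[of d]) auto
qed

lemma lipschitz_combination_pullback:
  fixes k :: nat
  assumes h: "h \<in> OXp X x0" and f: "\<forall>i<k. f i \<in> LX X x0" and m: "\<forall>i<k. m i \<in> OXp X x0"
    and h_eq: "germ_eq X x0 h (\<lambda>y. \<Sum>i<k. cscale (f i y) (m i y))"
  shows "\<exists>s a. 0 < s \<and> (\<forall>i<k. a i holomorphic_on ball 0 s) \<and>
    (\<forall>t\<in>ball 0 s. h (\<phi> t) = (\<Sum>i<k. cscale (a i t) (m i (\<phi> t))))"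
proof -
  have "\<forall>\<^sub>F e in at_right 0. \<forall>j. (\<lambda>t. h (\<phi> t) $ j) holomorphic_on ball 0 e"
    using h unfolding OXp_def by (intro eventually_all_finite eventually_holomorphic_pullback) auto
  moreover have "\<forall>\<^sub>F e in at_right 0. \<forall>i\<in>{..<k}. \<forall>j. (\<lambda>t. m i (\<phi> t) $ j) holomorphic_on ball 0 e"
    using m unfolding OXp_def
    by (intro eventually_ball_finite ballI eventually_all_finite eventually_holomorphic_pullback) auto
  moreover have "\<forall>\<^sub>F e in at_right 0. \<forall>i\<in>{..<k}. continuous_on (ball 0 e) (\<lambda>t. f i (\<phi> t))"
    using f by (intro eventually_ball_finite ballI eventually_continuous_pullback) auto
  moreover have "\<forall>\<^sub>F e in at_right 0. \<forall>t\<in>ball 0 e. h (\<phi> t) = (\<Sum>i<k. cscale (f i (\<phi> t)) (m i (\<phi> t)))"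
    using h_eq by (rule eventually_germ_eq_pullback)
  ultimately have "\<forall>\<^sub>F e in at_right 0. (\<forall>j. (\<lambda>t. h (\<phi> t) $ j) holomorphic_on ball 0 e) \<and>
      (\<forall>i\<in>{..<k}. \<forall>j. (\<lambda>t. m i (\<phi> t) $ j) holomorphic_on ball 0 e) \<and>
      (\<forall>i\<in>{..<k}. continuous_on (ball 0 e) (\<lambda>t. f i (\<phi> t))) \<and>
      (\<forall>t\<in>ball 0 e. h (\<phi> t) = (\<Sum>i<k. cscale (f i (\<phi> t)) (m i (\<phi> t))))"
    (is "eventually ?P _")
    by eventually_elim blast
  then obtain e where "0 < e" "?P e"
    by (rule eventually_at_right_0_imp_ex_pos)
  then have combination: "\<forall>t\<in>ball 0 e. h (\<phi> t) = (\<Sum>i<k. cscale (f i (\<phi> t)) (m i (\<phi> t)))"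
    by blast
  moreover have "\<forall>t\<in>ball 0 e. \<forall>j. h (\<phi> t) $ j = (\<Sum>i\<in>{..<k}. f i (\<phi> t) * m i (\<phi> t) $ j)"
    using combination by (simp add: cscale_def)
  with \<open>0 < e\<close> \<open>?P e\<close> obtain s a where "0 < s" "\<forall>i\<in>{..<k}. a i holomorphic_on ball 0 s"
    and "\<forall>t\<in>ball 0 s. \<forall>j. h (\<phi> t) $ j = (\<Sum>i\<in>{..<k}. a i t * m i (\<phi> t) $ j)"
    using continuous_combination_imp_holomorphic_combination[of "{..<k}" e "\<lambda>i t. f i (\<phi> t)"
        "\<lambda>i j t. m i (\<phi> t) $ j" "\<lambda>j t. h (\<phi> t) $ j"]
    by blast
  then show ?thesis
    by (intro exI[of _ s] exI[of _ a]) (simp add: vec_eq_iff cscale_def)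
qed

end

lemma submodule_subset_lip_saturation:
  assumes "M \<subseteq> OXp X x0"
  shows "M \<subseteq> lip_saturation X x0 M"
proof
  fix h assume "h \<in> M"
  have "(\<lambda>_. 1) \<in> LX X x0"
    unfolding LX_def by (intro CollectI exI[of _ UNIV] exI[of _ 0]) (simp add: lipschitz_on_def)
  moreover have "germ_eq X x0 h (\<lambda>y. \<Sum>i<(1::nat). cscale 1 (h y))"
    unfolding germ_eq_def cscale_def by (intro exI[of _ UNIV]) simp
  ultimately show "h \<in> lip_saturation X x0 M"
    unfolding lip_saturation_def using assms \<open>h \<in> M\<close>
    by (intro CollectI conjI exI[of _ 1] exI[of _ "\<lambda>_ _. 1"] exI[of _ "\<lambda>_. h"]) auto
qed

lemma lip_saturation_subset_integral_closure:
  assumes "M \<subseteq> OXp X x0"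
  shows "lip_saturation X x0 M \<subseteq> integral_closure X x0 M"
proof
  fix h assume "h \<in> lip_saturation X x0 M"
  then have h: "h \<in> OXp X x0" and "\<exists>k (f :: nat \<Rightarrow> complex^'a \<Rightarrow> complex) m.
      (\<forall>i<k. f i \<in> LX X x0 \<and> m i \<in> M) \<and> germ_eq X x0 h (\<lambda>y. \<Sum>i<k. cscale (f i y) (m i y))"
    unfolding lip_saturation_def by blast+
  then obtain k :: nat and f m where f: "\<forall>i<k. f i \<in> LX X x0" and m: "\<forall>i<k. m i \<in> M"
    and h_eq: "germ_eq X x0 h (\<lambda>y. \<Sum>i<k. cscale (f i y) (m i y))"
    by blast
  have m_O: "\<forall>i<k. m i \<in> OXp X x0"
    using m assms by blast
  show "h \<in> integral_closure X x0 M"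
    unfolding integral_closure_def
  proof (intro CollectI conjI h allI impI)
    fix \<phi> :: "complex \<Rightarrow> complex^'a" and r :: real
    assume "0 < r \<and> (\<forall>j. (\<lambda>t. \<phi> t $ j) holomorphic_on ball 0 r) \<and> \<phi> 0 = x0 \<and> \<phi> ` ball 0 r \<subseteq> X"
    then have "holomorphic_curve X x0 \<phi> r"
      by unfold_locales auto
    from holomorphic_curve.lipschitz_combination_pullback[OF this h f m_O h_eq]
    obtain s a where "0 < s" "\<forall>i<k. a i holomorphic_on ball 0 s"
      "\<forall>t\<in>ball 0 s. h (\<phi> t) = (\<Sum>i<k. cscale (a i t) (m i (\<phi> t)))"
      by blast
    then show "\<exists>s k (a :: nat \<Rightarrow> complex \<Rightarrow> complex) m. 0 < s \<and> (\<forall>i<k. a i holomorphic_on ball 0 s \<and> m i \<in> M) \<and>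
        (\<forall>t\<in>ball 0 s. h (\<phi> t) = (\<Sum>i<k. cscale (a i t) (m i (\<phi> t))))"
      using m by blast
  qed
qed


theorem mainTheorem18:
  fixes X :: "(complex^'n) set" and M :: "(complex^'n \<Rightarrow> complex^'p) set" and x0 :: "complex^'n"
  assumes "analytic_set X"
    and "x0 \<in> X"
    and "is_submodule_germ X x0 M"
  shows "M \<subseteq> lip_saturation X x0 M \<and> lip_saturation X x0 M \<subseteq> integral_closure X x0 M"
proof -
  have "M \<subseteq> OXp X x0"
    using assms(3) unfolding is_submodule_germ_def by blast
  then show ?thesis
    using submodule_subset_lip_saturation lip_saturation_subset_integral_closure by blast
qed

end
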